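(* Let $h\in[0:H-1]$, let $\mathbf{A}\in\{-1,1\}^{(d/2)\times d}$, and let $\widetilde{\mathbf{A}}_h$ be a submatrix of $\mathbf{A}$ consisting of $d/2-s_{\le h}$ of its rows. Suppose $|\mathcal{N}(\mathsf{O}^{\mathbf{M}_\mathbf{A}}(\widetilde{\mathbf{A}}_h),\alpha_h)|\ge 2^{s_h/\log d}$. Then there exist $s_{h+1}$ rows $\mathbf{R}_h$ of $\widetilde{\mathbf{A}}_h$ such that the matrix $\widetilde{\mathbf{A}}_{h+1}=\widetilde{\mathbf{A}}_h\setminus\mathbf{R}_h$ obtained by deleting them satisfies $$\big|\mathsf{O}^{\mathbf{M}_\mathbf{A}}(\widetilde{\mathbf{A}}_{h+1})\cap\mathcal{N}(\mathsf{O}^{\mathbf{M}_\mathbf{A}}(\widetilde{\mathbf{A}}_h),\alpha_h)\big|\ge 2^{s_h/(2\log d)}.$$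
   Context: Setting: $d$ large, $\delta\in(0,1)$, $k=d^{1-\delta-o(1)}$, $s=d^{1-\delta/2}\log^2 d$, $\xi=2\exp(-\log^5 d)$, $\xi'=\sqrt d\xi$, $n\le d\exp(-\log d/\log\log d)$, $\Delta=d/n$. A fixed deterministic $(k,n)$-protocol: on $\mathbf{A}$ Alice sends $\mathbf{M}_\mathbf{A}\in\{0,1\}^{kd}$; Bob's output is a unit vector $\mathbf{x}_{\mathbf{M},\mathbf{v},\mathbf{R}}$ defined for every $\mathbf{M}\in\{0,1\}^{kd}$, $\mathbf{v}\in\frac1{\sqrt d}\{-1,1\}^d$, $\mathbf{R}\in(\{-1,1\}^d\cup\{\mathsf{nil}\})^n$. A fixed set $V^*\subseteq\frac1{\sqrt d}\{-1,1\}^d$. For a matrix $\mathbf{B}$ with rows in $\{-1,1\}^d$: $\mathsf{T}^{\mathbf{M}}(\mathbf{B})=\{\mathbf{x}_{\mathbf{M},\mathbf{v},\mathbf{R}}:\mathbf{v}\in V^*,\ \text{each entry of }\mathbf{R}\text{ is }\mathsf{nil}\text{ or a row of }\mathbf{B}\}$ and $\mathsf{O}^{\mathbf{M}}(\mathbf{B})=\{\mathbf{x}\in\mathsf{T}^{\mathbf{M}}(\mathbf{B}):\|\mathbf{B}\mathbf{x}\|_\infty\le\xi'\}$. $\mathcal{N}(X,\alpha)$: a largest subset of $X$ with pairwise Euclidean distances at least $\alpha$. Parameters: $H$ is the smallest integer with $\frac{s}{\log^2 d}(\frac{\Delta}{\log^5 d})^H\ge d/10$; $s_h=\frac{s}{\log^2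 d}(\frac{\Delta}{\log^5 d})^h$ for $h\in[0:H-1]$ and $s_H=d/10$; $s_{\le h}=\sum_{i=1}^h s_i$, $s_{\le0}=0$; $\alpha_0=d^{-8}$, $\alpha_h=\alpha_{h-1}^8$. *)

theory Defs
  imports "HOL-Analysis.Analysis"
begin

definition lg :: "real \<Rightarrow> real" where "lg x = log 2 x"

text \<open>Vectors in R^d are functions nat => real vanishing outside {..<d}.\<close>
definition vecs :: "nat \<Rightarrow> (nat \<Rightarrow> real) set" where
  "vecs d = {x. \<forall>j\<ge>d. x j = 0}"

definition dotd :: "nat \<Rightarrow> (nat \<Rightarrow> real) \<Rightarrow> (nat \<Rightarrow> real) \<Rightarrow> real" where
  "dotd d x y = (\<Sum>j<d. x j * y j)"

definition normd :: "nat \<Rightarrow> (nat \<Rightarrow> real) \<Rightarrow> real" where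
  "normd d x = sqrt (dotd d x x)"

definition distd :: "nat \<Rightarrow> (nat \<Rightarrow> real) \<Rightarrow> (nat \<Rightarrow> real) \<Rightarrow> real" where
  "distd d x y = normd d (\<lambda>j. x j - y j)"

definition signvecs :: "nat \<Rightarrow> (nat \<Rightarrow> real) set" where
  "signvecs d = {x. (\<forall>j<d. x j = 1 \<or> x j = -1) \<and> (\<forall>j\<ge>d. x j = 0)}"

definition scaled_signvecs :: "nat \<Rightarrow> (nat \<Rightarrow> real) set" where
  "scaled_signvecs d = {x. (\<forall>j<d. x j = 1 / sqrt d \<or> x j = - 1 / sqrt d) \<and> (\<forall>j\<ge>d. x j = 0)}"

text \<open>Matrices in {-1,1}^((d/2) x d): row i (for i < d div 2) is A i.\<close>
definition sign_mats :: "nat \<Rightarrow> (nat \<Rightarrow> nat \<Rightarrow> real) set" where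
  "sign_mats d = {A. (\<forall>i<d div 2. A i \<in> signvecs d) \<and> (\<forall>i\<ge>d div 2. A i = (\<lambda>_. 0))}"

text \<open>A deterministic (k,n)-protocol: Alice maps A to a message in {0,1}^(kd);
  Bob's output (for every message M, every v, every R in ({-1,1}^d + nil)^n,
  nil being None) is a unit vector in R^d.\<close>
definition protocol ::
  "nat \<Rightarrow> nat \<Rightarrow> nat \<Rightarrow> ((nat \<Rightarrow> nat \<Rightarrow> real) \<Rightarrow> bool list)
     \<Rightarrow> (bool list \<Rightarrow> (nat \<Rightarrow> real) \<Rightarrow> (nat \<Rightarrow> real) option list \<Rightarrow> (nat \<Rightarrow> real)) \<Rightarrow> bool" where
  "protocol d k n msg out \<longleftrightarrow>
     (\<forall>A. length (msg A) = k * d) \<and>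
     (\<forall>M v R. length M = k * d \<longrightarrow> v \<in> scaled_signvecs d \<longrightarrow> length R = n \<longrightarrow>
        (\<forall>r\<in>set R. r = None \<or> (\<exists>b\<in>signvecs d. r = Some b)) \<longrightarrow>
        out M v R \<in> vecs d \<and> normd d (out M v R) = 1)"

text \<open>T^M(B) and O^M(B), where B is given by its set of Bs.\<close>
definition Tset ::
  "nat \<Rightarrow> (bool list \<Rightarrow> (nat \<Rightarrow> real) \<Rightarrow> (nat \<Rightarrow> real) option list \<Rightarrow> (nat \<Rightarrow> real))
     \<Rightarrow> (nat \<Rightarrow> real) set \<Rightarrow> bool list \<Rightarrow> (nat \<Rightarrow> real) set \<Rightarrow> (nat \<Rightarrow> real) set" where
  "Tset n out Vs M Bs = {out M v R | v R. v \<in> Vs \<and> length R = n \<and>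
       (\<forall>r\<in>set R. r = None \<or> (\<exists>b\<in>Bs. r = Some b))}"

definition Oset ::
  "nat \<Rightarrow> nat \<Rightarrow> real \<Rightarrow> (bool list \<Rightarrow> (nat \<Rightarrow> real) \<Rightarrow> (nat \<Rightarrow> real) option list \<Rightarrow> (nat \<Rightarrow> real))
     \<Rightarrow> (nat \<Rightarrow> real) set \<Rightarrow> bool list \<Rightarrow> (nat \<Rightarrow> real) set \<Rightarrow> (nat \<Rightarrow> real) set" where
  "Oset d n xi' out Vs M Bs = {x \<in> Tset n out Vs M Bs. \<forall>b\<in>Bs. \<bar>dotd d b x\<bar> \<le> xi'}"

definition separated :: "nat \<Rightarrow> (nat \<Rightarrow> real) set \<Rightarrow> real \<Rightarrow> (nat \<Rightarrow> real) set \<Rightarrow> bool" where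
  "separated d X \<alpha> S \<longleftrightarrow> S \<subseteq> X \<and> (\<forall>x\<in>S. \<forall>y\<in>S. x \<noteq> y \<longrightarrow> distd d x y \<ge> \<alpha>)"

definition largest_net :: "nat \<Rightarrow> (nat \<Rightarrow> real) set \<Rightarrow> real \<Rightarrow> (nat \<Rightarrow> real) set \<Rightarrow> bool" where
  "largest_net d X \<alpha> N \<longleftrightarrow> separated d X \<alpha> N \<and> finite N \<and>
     (\<forall>S. separated d X \<alpha> S \<and> finite S \<longrightarrow> card S \<le> card N)"

definition xi :: "nat \<Rightarrow> real" where "xi d = 2 * exp (- (lg d ^ 5))"
definition xi' :: "nat \<Rightarrow> real" where "xi' d = sqrt d * xi d"
definition spar :: "real \<Rightarrow> nat \<Rightarrow> real" where "spar \<delta> d = d powr (1 - \<delta> / 2) * lg d ^ 2"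
definition Delta :: "nat \<Rightarrow> nat \<Rightarrow> real" where "Delta d n = real d / real n"

definition Hpar :: "real \<Rightarrow> nat \<Rightarrow> nat \<Rightarrow> nat" where
  "Hpar \<delta> d n = (LEAST H. spar \<delta> d / lg d ^ 2 * (Delta d n / lg d ^ 5) ^ H \<ge> real d / 10)"

definition sh :: "real \<Rightarrow> nat \<Rightarrow> nat \<Rightarrow> nat \<Rightarrow> real" where
  "sh \<delta> d n h = (if h < Hpar \<delta> d n then spar \<delta> d / lg d ^ 2 * (Delta d n / lg d ^ 5) ^ h
                  else real d / 10)"

text \<open>Number of Bs deleted in the first h rounds (integer rounding: ceil of each s_i).\<close>
definition sle_nat :: "real \<Rightarrow> nat \<Rightarrow> nat \<Rightarrow> nat \<Rightarrow> nat" where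
  "sle_nat \<delta> d n h = (\<Sum>i\<in>{1..h}. nat \<lceil>sh \<delta> d n i\<rceil>)"

fun alpha :: "nat \<Rightarrow> nat \<Rightarrow> real" where
  "alpha d 0 = real d powr (-8)"
| "alpha d (Suc h) = alpha d h ^ 8"

end

theory Submission
  imports Defs "HOL-Real_Asymp.Real_Asymp"
begin

text \<open>Every point x of the net N is an output of Bob computed from a transcript that reads at most
  n rows of the current matrix; deleting rows outside this set U x keeps x in O. If the m deleted
  rows are chosen uniformly among the |I| remaining ones, x survives with probability at least
  C(|I| - n, m) / C(|I|, m) \<ge> (1 - n / (|I| - m))^m \<ge> exp (-2mn / (|I| - m)), so some choice keeps
  that fraction of N. With m \<approx> s_{h+1} \<le> \<Delta> s_h / log^5 d, n = d / \<Delta> and |I| \<ge> d / 5, the exponent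
  is O(s_h / log^5 d) \<le> (ln 2) s_h / (2 log d), which turns 2^(s_h / log d) into 2^(s_h / (2 log d)).\<close>

section \<open>Random deletion of rows\<close>

lemma Suc_times_binomial_real:
  "real (Suc k) * real (b choose Suc k) = (real b - real k) * real (b choose k)"
  using gbinomial_mult_1[of "real b" k] by (simp add: binomial_gbinomial algebra_simps)

lemma binomial_diff_ge_pow:
  fixes a n M :: nat
  assumes "M + n \<le> a" "M < a" "m \<le> M"
  shows "real (a choose m) * (1 - real n / (real a - real M)) ^ m \<le> real ((a - n) choose m)"
  using \<open>m \<le> M\<close>
proof (induction m)
  case 0
  then show ?case by simp
next
  case (Suc m)
  define q where "q = 1 - real n / (real a - real M)"
  have aM: "real a - real M > 0" using assms(1,2) by simp
  have q0: "q \<ge> 0" unfolding q_def using assms(1) aM by (simp add: field_simps)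
  have am: "real a - real m > 0" using Suc.prems assms(1,2) by simp
  have IH: "real (a choose m) * q ^ m \<le> real ((a - n) choose m)" using Suc by (simp add: q_def)
  have factor: "q * (real a - real m) \<le> real (a - n) - real m"
  proof -
    have "real n * (real a - real M) \<le> real n * (real a - real m)"
      using Suc.prems by (intro mult_left_mono) auto
    then have "real n \<le> real n * (real a - real m) / (real a - real M)"
      using aM by (simp add: le_divide_eq)
    then show ?thesis using assms(1) by (simp add: q_def algebra_simps of_nat_diff)
  qed
  have "real (Suc m) * (real (a choose Suc m) * q ^ Suc m)
      = q * q ^ m * (real (Suc m) * real (a choose Suc m))" by simp
  also have "\<dots> = q * (real a - real m) * (real (a choose m) * q ^ m)"
    by (simp only: Suc_times_binomial_real ac_simps)
  also have "\<dots> \<le> (real (a - n) - real m) * real ((a - n) choose m)"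
    using IH factor q0 am Suc.prems assms(1) by (intro mult_mono) auto
  also have "\<dots> = real (Suc m) * real ((a - n) choose Suc m)"
    by (rule Suc_times_binomial_real[symmetric])
  finally show ?case by (simp add: q_def)
qed

lemma one_minus_pow_ge_exp:
  fixes x :: real
  assumes "0 \<le> x" "x \<le> 1/2"
  shows "exp (- 2 * real m * x) \<le> (1 - x) ^ m"
proof -
  have "- 2 * x \<le> - x - 2 * x\<^sup>2"
    using assms mult_left_mono[of x "1/2" x] by (simp add: power2_eq_square)
  also have "\<dots> \<le> ln (1 - x)" by (rule ln_one_minus_pos_lower_bound[OF assms])
  finally have "real m * (- 2 * x) \<le> real m * ln (1 - x)" by (rule mult_left_mono) simp
  then have "exp (- 2 * real m * x) \<le> exp (real m * ln (1 - x))" by simp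
  also have "\<dots> = (1 - x) ^ m" using assms by (simp add: exp_of_nat_mult)
  finally show ?thesis .
qed

text \<open>First-moment argument: double count the pairs (R, x) with R an m-subset of I avoiding U x.\<close>

lemma exists_subset_avoiding_many:
  fixes I :: "'a set" and N :: "'b set" and U :: "'b \<Rightarrow> 'a set"
  assumes fI: "finite I" and fN: "finite N" and U: "\<forall>x\<in>N. U x \<subseteq> I \<and> card (U x) \<le> n"
    and m: "m \<le> card I"
  shows "\<exists>R. R \<subseteq> I \<and> card R = m \<and>
     card N * ((card I - n) choose m) \<le> card {x\<in>N. R \<inter> U x = {}} * (card I choose m)"
proof (rule ccontr)
  assume neg: "\<not> ?thesis"
  define S where "S = {R. R \<subseteq> I \<and> card R = m}"
  let ?good = "\<lambda>R. card {x\<in>N. R \<inter> U x = {}}"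
  have fS: "finite S" unfolding S_def using fI by (simp add: finite_subset[of _ "Pow I"] Pow_def)
  have cS: "card S = card I choose m" unfolding S_def using n_subsets[OF fI] .
  then have "S \<noteq> {}" using m by auto
  then have "(\<Sum>R\<in>S. ?good R * (card I choose m)) < (\<Sum>R\<in>S. card N * ((card I - n) choose m))"
    using neg fS by (intro sum_strict_mono) (auto simp: S_def)
  then have less: "(\<Sum>R\<in>S. ?good R) * (card I choose m) < (card I choose m) * (card N * ((card I - n) choose m))"
    by (simp add: sum_distrib_right cS)
  have "card N * ((card I - n) choose m) = (\<Sum>x\<in>N. (card I - n) choose m)" by simp
  also have "\<dots> \<le> (\<Sum>x\<in>N. card (I - U x) choose m)"
  proof (rule sum_mono)
    fix x assume "x \<in> N"
    then have "U x \<subseteq> I" using U by auto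
    then have "card (I - U x) = card I - card (U x)"
      using fI by (simp add: card_Diff_subset finite_subset)
    then show "(card I - n) choose m \<le> card (I - U x) choose m"
      using U \<open>x \<in> N\<close> by (intro binomial_right_mono) auto
  qed
  also have "\<dots> = (\<Sum>x\<in>N. \<Sum>R | R \<in> S \<and> R \<inter> U x = {}. (1::nat))"
  proof (rule sum.cong[OF refl])
    fix x assume "x \<in> N"
    have "{R. R \<in> S \<and> R \<inter> U x = {}} = {R. R \<subseteq> I - U x \<and> card R = m}"
      unfolding S_def by auto
    then show "card (I - U x) choose m = (\<Sum>R | R \<in> S \<and> R \<inter> U x = {}. (1::nat))"
      using n_subsets[of "I - U x" m] fI by simp
  qed
  also have "\<dots> = (\<Sum>R\<in>S. \<Sum>x\<in>{x\<in>N. R \<inter> U x = {}}. (1::nat))"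
    by (rule sum.swap_restrict[OF fN fS])
  also have "\<dots> = (\<Sum>R\<in>S. ?good R)" by simp
  finally show False using less by simp
qed

text \<open>U is the set of rows read by a transcript that produces x.\<close>

lemma Oset_mem_after_deletion:
  assumes "x \<in> Oset d n t out Vs M (A ` I)"
  shows "\<exists>U. U \<subseteq> I \<and> card U \<le> n \<and>
    (\<forall>R. R \<inter> U = {} \<longrightarrow> x \<in> Oset d n t out Vs M (A ` (I - R)))"
proof -
  from assms obtain v Rl where x: "x = out M v Rl" and v: "v \<in> Vs" and len: "length Rl = n"
    and Rl: "\<forall>r\<in>set Rl. r = None \<or> (\<exists>b\<in>A ` I. r = Some b)"
    and dots: "\<forall>b\<in>A ` I. \<bar>dotd d b x\<bar> \<le> t"
    unfolding Oset_def Tset_def by blast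
  define row where "row r = (SOME i. i \<in> I \<and> r = Some (A i))" for r
  define U where "U = row ` {r\<in>set Rl. r \<noteq> None}"
  have row: "row r \<in> I \<and> r = Some (A (row r))" if "r \<in> set Rl" "r \<noteq> None" for r
  proof -
    have "\<exists>i. i \<in> I \<and> r = Some (A i)" using Rl that by auto
    then show ?thesis unfolding row_def by (rule someI_ex)
  qed
  have "card U \<le> card (set Rl)"
    unfolding U_def by (rule order_trans[OF card_image_le card_mono]) auto
  also have "\<dots> \<le> n" using len card_length by auto
  finally have "card U \<le> n" .
  moreover have "x \<in> Oset d n t out Vs M (A ` (I - R))" if R: "R \<inter> U = {}" for R
  proof -
    have "r = None \<or> (\<exists>b\<in>A ` (I - R). r = Some b)" if r: "r \<in> set Rl" for r
    proof (cases "r = None")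
      case False
      then have "row r \<in> I - R" "r = Some (A (row r))" using row r R unfolding U_def by auto
      then show ?thesis by blast
    qed simp
    then have "x \<in> Tset n out Vs M (A ` (I - R))" unfolding Tset_def using x v len by blast
    moreover have "\<forall>b\<in>A ` (I - R). \<bar>dotd d b x\<bar> \<le> t" using dots by auto
    ultimately show ?thesis unfolding Oset_def by blast
  qed
  moreover have "U \<subseteq> I" unfolding U_def using row by auto
  ultimately show ?thesis by blast
qed

lemma exists_deletion_keeping_Oset:
  assumes fI: "finite I" and fN: "finite N" and NO: "N \<subseteq> Oset d n t out Vs M (A ` I)"
    and m: "m < card I" and n: "2 * real n \<le> real (card I) - real m"
  shows "\<exists>R. R \<subseteq> I \<and> card R = m \<and>
    real (card N) * exp (- 2 * real m * (real n / (real (card I) - real m)))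
      \<le> real (card (Oset d n t out Vs M (A ` (I - R)) \<inter> N))"
proof -
  have "\<forall>x\<in>N. \<exists>U. U \<subseteq> I \<and> card U \<le> n \<and>
      (\<forall>R. R \<inter> U = {} \<longrightarrow> x \<in> Oset d n t out Vs M (A ` (I - R)))"
  proof
    fix x assume "x \<in> N"
    then have "x \<in> Oset d n t out Vs M (A ` I)" using NO by blast
    then show "\<exists>U. U \<subseteq> I \<and> card U \<le> n \<and>
        (\<forall>R. R \<inter> U = {} \<longrightarrow> x \<in> Oset d n t out Vs M (A ` (I - R)))"
      by (rule Oset_mem_after_deletion)
  qed
  from bchoice[OF this] obtain U where U: "\<forall>x\<in>N. U x \<subseteq> I \<and> card (U x) \<le> n \<and>
      (\<forall>R. R \<inter> U x = {} \<longrightarrow> x \<in> Oset d n t out Vs M (A ` (I - R)))" ..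
  obtain R where R: "R \<subseteq> I" "card R = m"
    and count: "card N * ((card I - n) choose m) \<le> card {x\<in>N. R \<inter> U x = {}} * (card I choose m)"
    using exists_subset_avoiding_many[OF fI fN, of U n m] U m by auto
  define p where "p = real n / (real (card I) - real m)"
  have Im: "real (card I) - real m > 0" using m by simp
  have p0: "0 \<le> p" unfolding p_def using Im by simp
  have p1: "p \<le> 1/2" unfolding p_def using Im n by (simp add: divide_le_eq)
  have "m + n \<le> card I" using n by linarith
  then have "real (card I choose m) * (1 - p) ^ m \<le> real ((card I - n) choose m)"
    unfolding p_def using m by (intro binomial_diff_ge_pow) auto
  then have "real (card N) * (real (card I choose m) * (1 - p) ^ m)
      \<le> real (card N) * real ((card I - n) choose m)"
    by (rule mult_left_mono) simp
  also have "\<dots> \<le> real (card {x\<in>N. R \<inter> U x = {}}) * real (card I choose m)"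
    using count by (simp only: of_nat_mult[symmetric] of_nat_le_iff)
  finally have "(real (card N) * (1 - p) ^ m) * real (card I choose m)
      \<le> real (card {x\<in>N. R \<inter> U x = {}}) * real (card I choose m)"
    by (simp only: ac_simps)
  then have "real (card N) * (1 - p) ^ m \<le> real (card {x\<in>N. R \<inter> U x = {}})"
    using m by (simp only: mult_le_cancel_right_pos of_nat_0_less_iff zero_less_binomial_iff less_imp_le)
  also have "card {x\<in>N. R \<inter> U x = {}} \<le> card (Oset d n t out Vs M (A ` (I - R)) \<inter> N)"
    using U fN by (intro card_mono) auto
  finally have survivors: "real (card N) * (1 - p) ^ m
      \<le> real (card (Oset d n t out Vs M (A ` (I - R)) \<inter> N))" by simp
  have "real (card N) * exp (- 2 * real m * p) \<le> real (card N) * (1 - p) ^ m"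
    using one_minus_pow_ge_exp[OF p0 p1] by (rule mult_left_mono) simp
  with survivors R show ?thesis unfolding p_def by auto
qed

section \<open>Estimates for the parameters\<close>

lemma lg_nonneg: "0 \<le> lg (real d)"
  unfolding lg_def by (cases "d = 0") (auto simp: log_def)

lemma lg_pos: "1 < d \<Longrightarrow> 0 < lg (real d)"
  unfolding lg_def by simp

lemma sum_powers_le_twice_top:
  fixes r :: real
  assumes "2 \<le> r"
  shows "(\<Sum>i\<le>h. r ^ i) \<le> 2 * r ^ h"
proof (induction h)
  case (Suc h)
  have "2 * r ^ h \<le> r * r ^ h" using assms by (intro mult_right_mono) auto
  then show ?case using Suc by simp
qed simp

lemma real_nat_ceiling_le: "0 \<le> y \<Longrightarrow> real (nat \<lceil>y\<rceil>) \<le> y + 1"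
  using of_int_ceiling_le_add_one[of y] by simp

lemma sh_le_tenth: "sh \<delta> d n h \<le> real d / 10"
  using not_less_Least[of h "\<lambda>H. spar \<delta> d / lg d ^ 2 * (Delta d n / lg d ^ 5) ^ H \<ge> real d / 10"]
  unfolding sh_def Hpar_def by auto

lemma Hpar_attained:
  assumes "2 \<le> Delta d n / lg d ^ 5" "1 \<le> spar \<delta> d / lg d ^ 2"
  shows "real d / 10 \<le> spar \<delta> d / lg d ^ 2 * (Delta d n / lg d ^ 5) ^ Hpar \<delta> d n"
  unfolding Hpar_def
proof (rule LeastI)
  have "real d \<le> 2 ^ d" using of_nat_less_two_power[of d, where ?'a = real] by linarith
  also have "\<dots> \<le> (Delta d n / lg d ^ 5) ^ d" using assms(1) by (intro power_mono) auto
  also have "\<dots> \<le> spar \<delta> d / lg d ^ 2 * (Delta d n / lg d ^ 5) ^ d"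
    using mult_right_mono[OF assms(2), of "(Delta d n / lg d ^ 5) ^ d"] assms(1) by simp
  finally have "real d \<le> spar \<delta> d / lg d ^ 2 * (Delta d n / lg d ^ 5) ^ d" .
  then show "real d / 10 \<le> spar \<delta> d / lg d ^ 2 * (Delta d n / lg d ^ 5) ^ d" by linarith
qed

lemma sh_Suc_le:
  assumes "2 \<le> Delta d n / lg d ^ 5" "1 \<le> spar \<delta> d / lg d ^ 2" "h < Hpar \<delta> d n"
  shows "sh \<delta> d n (Suc h) \<le> Delta d n / lg d ^ 5 * sh \<delta> d n h"
proof (cases "Suc h < Hpar \<delta> d n")
  case True
  then show ?thesis using assms(3) unfolding sh_def by (simp add: algebra_simps)
next
  case False
  then have "Hpar \<delta> d n = Suc h" using assms(3) by simp
  then show ?thesis using Hpar_attained[OF assms(1,2)] assms(3) unfolding sh_def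
    by (simp add: algebra_simps)
qed

lemma sle_nat_le:
  assumes "2 \<le> Delta d n / lg d ^ 5" "1 \<le> spar \<delta> d / lg d ^ 2" and h: "h < Hpar \<delta> d n"
  shows "real (sle_nat \<delta> d n h) \<le> 3 * sh \<delta> d n h"
proof -
  define r c where "r = Delta d n / lg d ^ 5" and "c = spar \<delta> d / lg d ^ 2"
  have r: "2 \<le> r" and c: "1 \<le> c" using assms(1,2) unfolding r_def c_def .
  have sh: "sh \<delta> d n i = c * r ^ i" if "i \<le> h" for i
    using that h unfolding sh_def r_def c_def by simp
  have sum_le: "real (sle_nat \<delta> d n h) \<le> c * (\<Sum>i\<in>{1..h}. r ^ i) + real h"
  proof -
    have "real (nat \<lceil>sh \<delta> d n i\<rceil>) \<le> c * r ^ i + 1" if "i \<in> {1..h}" for i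
    proof -
      have "0 \<le> c * r ^ i" using r c by simp
      then show ?thesis using that by (simp add: sh real_nat_ceiling_le)
    qed
    then have "real (sle_nat \<delta> d n h) \<le> (\<Sum>i\<in>{1..h}. c * r ^ i + 1)"
      unfolding sle_nat_def of_nat_sum by (rule sum_mono)
    then show ?thesis by (simp add: sum.distrib sum_distrib_left)
  qed
  have "(\<Sum>i\<in>{1..h}. r ^ i) \<le> (\<Sum>i\<le>h. r ^ i)" using r by (intro sum_mono2) auto
  also have "\<dots> \<le> 2 * r ^ h" by (rule sum_powers_le_twice_top[OF r])
  finally have geom: "c * (\<Sum>i\<in>{1..h}. r ^ i) \<le> 2 * (c * r ^ h)"
    using c by (simp add: mult_left_mono)
  have "real h \<le> 2 ^ h" using of_nat_less_two_power[of h, where ?'a = real] by linarith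
  also have "\<dots> \<le> r ^ h" using r by (intro power_mono) auto
  also have "\<dots> \<le> c * r ^ h" using mult_right_mono[OF c, of "r ^ h"] r by simp
  finally have "real h \<le> c * r ^ h" .
  with sum_le geom show ?thesis by (simp add: sh)
qed

lemma deletion_exponent_le:
  fixes m n N0 S r d L :: real
  assumes m: "m \<le> S * r + 1" and rn: "r * n = d / L ^ 5" and gap: "d / 20 \<le> N0 - m"
    and "0 \<le> m" "0 < n" "n \<le> d / 100" and L: "4 \<le> L" and S: "6 * L \<le> S"
  shows "2 * m * (n / (N0 - m)) \<le> ln 2 * (S / (2 * L))"
proof -
  have d: "0 < d" using \<open>0 < n\<close> \<open>n \<le> d / 100\<close> by simp
  have "2 * m * (n / (N0 - m)) \<le> 2 * (S * r + 1) * (n / (d / 20))"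
    using m gap d \<open>0 \<le> m\<close> \<open>0 < n\<close> by (intro mult_mono divide_left_mono) auto
  also have "\<dots> = 40 * S * (r * n) / d + 40 * n / d"
    using d by (simp add: field_simps)
  also have "\<dots> = 40 * S / L ^ 5 + 40 * n / d"
    using d unfolding rn by simp
  also have "40 * n / d \<le> 2 / 5" using \<open>n \<le> d / 100\<close> d by (simp add: divide_le_eq)
  also have "40 * S / L ^ 5 \<le> 40 * S / (256 * L)"
  proof -
    have "4 ^ 4 * L \<le> L ^ 4 * L" using L by (intro mult_right_mono power_mono) auto
    also have "L ^ 4 * L = L ^ 5" by (simp add: eval_nat_numeral)
    finally have "256 * L \<le> L ^ 5" by simp
    then show ?thesis using L S by (intro divide_left_mono) auto
  qed
  also have "40 * S / (256 * L) + 2 / 5 \<le> (1 / 2) * (S / (2 * L))"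
    using L S by (simp add: field_simps)
  also have "\<dots> \<le> ln 2 * (S / (2 * L))"
  proof (rule mult_right_mono)
    show "1 / 2 \<le> ln (2::real)" using ln_le_minus_one[of "1/2"] by (simp add: ln_div)
  qed (use L S in simp)
  finally show ?thesis by simp
qed

lemma Delta_over_lg_pow_ge:
  assumes "1 < d" "0 < n" "real n \<le> real d * exp (- lg d / lg (lg d))"
    and "2 * lg d ^ 5 \<le> exp (lg d / lg (lg d))"
  shows "2 \<le> Delta d n / lg d ^ 5"
proof -
  have "real n * exp (lg d / lg (lg d)) \<le> real d * exp (- lg d / lg (lg d)) * exp (lg d / lg (lg d))"
    using assms(3) by (rule mult_right_mono) simp
  also have "\<dots> = real d" by (simp add: mult.assoc exp_minus[symmetric] exp_add[symmetric])
  finally have "exp (lg d / lg (lg d)) \<le> Delta d n"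
    using assms(2) unfolding Delta_def by (simp add: le_divide_eq mult.commute)
  then have "2 * lg d ^ 5 \<le> Delta d n" using assms(4) by linarith
  then show ?thesis using lg_pos[OF assms(1)] by (simp add: le_divide_eq)
qed

lemma sqrt_le_spar_over_lg_sq:
  assumes "\<delta> \<le> 1" "1 < d"
  shows "sqrt d \<le> spar \<delta> d / lg d ^ 2"
proof -
  have "sqrt d = real d powr (1 / 2)" by (simp add: powr_half_sqrt)
  also have "\<dots> \<le> real d powr (1 - \<delta> / 2)" using assms by (intro powr_mono) auto
  also have "\<dots> = spar \<delta> d / lg d ^ 2" using lg_pos[OF assms(2)] by (simp add: spar_def)
  finally show ?thesis .
qed

lemma sh_nonneg: "0 \<le> sh \<delta> d n h"
  using lg_nonneg[of d] unfolding sh_def spar_def Delta_def by simp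

lemma deletion_step_bounds:
  assumes "\<delta> \<le> 1" "even d" and d: "100 \<le> d" "2 * lg d ^ 5 \<le> exp (lg d / lg (lg d))" "6 * lg d \<le> sqrt d"
    and n: "1 \<le> n" "real n \<le> real d * exp (- lg d / lg (lg d))" and h: "h < Hpar \<delta> d n"
  defines "m \<equiv> nat \<lceil>sh \<delta> d n (Suc h)\<rceil>" and "N0 \<equiv> d div 2 - sle_nat \<delta> d n h"
  shows "m < N0" "2 * real n \<le> real N0 - real m"
    "2 * real m * (real n / (real N0 - real m)) \<le> ln 2 * (sh \<delta> d n h / (2 * lg d))"
proof -
  define L r S where "L = lg d" and "r = Delta d n / lg d ^ 5" and "S = sh \<delta> d n h"
  have L: "4 \<le> L"
  proof -
    have "(2::real) powr 4 \<le> real d" using d(1) by simp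
    then show ?thesis unfolding L_def lg_def using d(1) by (subst le_log_iff) auto
  qed
  have r: "2 \<le> r" unfolding r_def using d(1,2) n by (intro Delta_over_lg_pow_ge) auto
  have c: "sqrt d \<le> spar \<delta> d / lg d ^ 2"
    using assms(1) d(1) by (intro sqrt_le_spar_over_lg_sq) auto
  have "1 \<le> sqrt (real d)" using d(1) by simp
  with c have c1: "1 \<le> spar \<delta> d / lg d ^ 2" by linarith
  have "sqrt d * 1 \<le> spar \<delta> d / lg d ^ 2 * r ^ h"
    using c c1 r by (intro mult_mono) auto
  then have "6 * L \<le> S" using d(3) h unfolding S_def sh_def r_def L_def by simp
  have rn: "r * real n = real d / L ^ 5"
    using n(1) unfolding r_def L_def Delta_def by (simp add: field_simps)
  have "2 * real n \<le> real d / L ^ 5"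
    using mult_right_mono[OF r, of "real n"] unfolding rn by simp
  also have "\<dots> \<le> real d / 100"
  proof (rule divide_left_mono)
    show "100 \<le> L ^ 5" using power_mono[OF L, of 5] by simp
  qed (use L in simp_all)
  finally have n_small: "2 * real n \<le> real d / 100" .
  have m_le: "real m \<le> sh \<delta> d n (Suc h) + 1"
    unfolding m_def by (rule real_nat_ceiling_le[OF sh_nonneg])
  have "sh \<delta> d n (Suc h) \<le> S * r"
    using sh_Suc_le[OF r[unfolded r_def] c1 h] unfolding S_def r_def by (simp only: mult.commute)
  then have m: "real m \<le> S * r + 1" "real m \<le> real d / 10 + 1"
    using m_le sh_le_tenth[of \<delta> d n "Suc h"] by linarith+
  have sle: "real (sle_nat \<delta> d n h) \<le> 3 * S"
    using sle_nat_le[OF _ c1 h] r unfolding r_def S_def by simp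
  have half: "real (d div 2) = real d / 2" using \<open>even d\<close> by (auto elim: evenE)
  have "real (sle_nat \<delta> d n h) \<le> real (d div 2)"
    using sle sh_le_tenth[of \<delta> d n h] half unfolding S_def by linarith
  then have "real N0 = real d / 2 - real (sle_nat \<delta> d n h)"
    unfolding N0_def half[symmetric] by (simp add: of_nat_diff)
  then have gap: "real d / 20 \<le> real N0 - real m"
    using m(2) sle d(1) sh_le_tenth[of \<delta> d n h] unfolding S_def by linarith
  then show "m < N0" using d(1) by simp
  show "2 * real n \<le> real N0 - real m" using gap n_small by linarith
  show "2 * real m * (real n / (real N0 - real m)) \<le> ln 2 * (sh \<delta> d n h / (2 * lg d))"
    using deletion_exponent_le[OF m(1) rn gap] n n_small L \<open>6 * L \<le> S\<close>
    unfolding S_def L_def by simp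
qed

lemma exists_deletion_step:
  assumes "\<delta> \<le> 1" "even d" "100 \<le> d" "2 * lg d ^ 5 \<le> exp (lg d / lg (lg d))" "6 * lg d \<le> sqrt d"
    and "1 \<le> n" "real n \<le> real d * exp (- lg d / lg (lg d))" "h < Hpar \<delta> d n"
    and fI: "finite I" and cI: "card I = d div 2 - sle_nat \<delta> d n h"
    and fN: "finite N" and NO: "N \<subseteq> Oset d n t out Vs M (A ` I)"
    and large: "2 powr (sh \<delta> d n h / lg d) \<le> real (card N)"
  shows "\<exists>R. R \<subseteq> I \<and> card R = nat \<lceil>sh \<delta> d n (Suc h)\<rceil> \<and>
    2 powr (sh \<delta> d n h / (2 * lg d)) \<le> real (card (Oset d n t out Vs M (A ` (I - R)) \<inter> N))"
proof -
  define m S L where "m = nat \<lceil>sh \<delta> d n (Suc h)\<rceil>" and "S = sh \<delta> d n h" and "L = lg d"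
  note bounds = deletion_step_bounds[OF assms(1-8), folded cI, folded m_def S_def L_def]
  obtain R where R: "R \<subseteq> I" "card R = m" and surv:
    "real (card N) * exp (- 2 * real m * (real n / (real (card I) - real m)))
      \<le> real (card (Oset d n t out Vs M (A ` (I - R)) \<inter> N))"
    using exists_deletion_keeping_Oset[OF fI fN NO bounds(1,2)] by blast
  have "2 powr (S / (2 * L)) = 2 powr (S / L) * exp (- (ln 2 * (S / (2 * L))))"
    by (simp add: powr_def exp_add[symmetric] exp_minus field_simps)
  also have "\<dots> \<le> real (card N) * exp (- 2 * real m * (real n / (real (card I) - real m)))"
    using large bounds(3) unfolding S_def L_def by (intro mult_mono) auto
  finally show ?thesis using R surv unfolding m_def S_def L_def by auto
qed

lemma eventually_large_dimension:
  "eventually (\<lambda>d. 100 \<le> d \<and> 2 * lg d ^ 5 \<le> exp (lg d / lg (lg d)) \<and> 6 * lg d \<le> sqrt d)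
     sequentially"
proof -
  have "eventually (\<lambda>x::real. 100 \<le> x \<and> 2 * log 2 x ^ 5 \<le> exp (log 2 x / log 2 (log 2 x)) \<and>
      6 * log 2 x \<le> sqrt x) at_top"
    by (intro eventually_conj; real_asymp)
  from filterlim_iff[THEN iffD1, OF filterlim_real_sequentially, rule_format, OF this]
  show ?thesis unfolding lg_def by simp
qed

theorem lemma5p6:
  fixes \<delta> :: real and k :: "nat \<Rightarrow> nat"
  assumes "0 < \<delta>" and "\<delta> < 1"
    and "eventually (\<lambda>d. k d > 0) sequentially"
    and "((\<lambda>d. ln (real (k d)) / ln (real d)) \<longlongrightarrow> 1 - \<delta>) sequentially"
  shows "\<exists>D. \<forall>d\<ge>D. even d \<longrightarrow>
    (\<forall>n msg out Vs A h I N.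
       1 \<le> n \<and> real n \<le> real d * exp (- lg d / lg (lg d)) \<and>
       protocol d (k d) n msg out \<and>
       Vs \<subseteq> scaled_signvecs d \<and>
       A \<in> sign_mats d \<and>
       h < Hpar \<delta> d n \<and>
       I \<subseteq> {..<d div 2} \<and> card I = d div 2 - sle_nat \<delta> d n h \<and>
       largest_net d (Oset d n (xi' d) out Vs (msg A) (A ` I)) (alpha d h) N \<and>
       real (card N) \<ge> 2 powr (sh \<delta> d n h / lg d)
     \<longrightarrow> (\<exists>R. R \<subseteq> I \<and> card R = nat \<lceil>sh \<delta> d n (Suc h)\<rceil> \<and>
            real (card (Oset d n (xi' d) out Vs (msg A) (A ` (I - R)) \<inter> N))
              \<ge> 2 powr (sh \<delta> d n h / (2 * lg d))))"
proof -
  from eventually_large_dimension[unfolded eventually_sequentially] obtain D :: nat where D: "\<forall>d\<ge>D.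
      100 \<le> d \<and> 2 * lg d ^ 5 \<le> exp (lg d / lg (lg d)) \<and> 6 * lg d \<le> sqrt d" ..
  show ?thesis
  proof (rule exI[of _ D], intro allI impI, elim conjE)
    fix d n msg out Vs A h I N
    assume "D \<le> d" and ev: "even d" and n: "1 \<le> n" "real n \<le> real d * exp (- lg d / lg (lg d))"
      and h: "h < Hpar \<delta> d n" and I: "I \<subseteq> {..<d div 2}" "card I = d div 2 - sle_nat \<delta> d n h"
      and net: "largest_net d (Oset d n (xi' d) out Vs (msg A) (A ` I)) (alpha d h) N"
      and large: "2 powr (sh \<delta> d n h / lg d) \<le> real (card N)"
    from D \<open>D \<le> d\<close> have d: "100 \<le> d" "2 * lg d ^ 5 \<le> exp (lg d / lg (lg d))" "6 * lg d \<le> sqrt d"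
      by auto
    have "finite I" using I(1) finite_subset by blast
    moreover have "finite N" "N \<subseteq> Oset d n (xi' d) out Vs (msg A) (A ` I)"
      using net unfolding largest_net_def separated_def by auto
    ultimately show "\<exists>R. R \<subseteq> I \<and> card R = nat \<lceil>sh \<delta> d n (Suc h)\<rceil> \<and>
        2 powr (sh \<delta> d n h / (2 * lg d)) \<le> real (card (Oset d n (xi' d) out Vs (msg A) (A ` (I - R)) \<inter> N))"
      using \<open>\<delta> < 1\<close> by (intro exists_deletion_step[OF _ ev d n h _ I(2) _ _ large]) auto
  qed
qed

end
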